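(* Let $\mu,\nu>0$; for integers $N>\max(\mu,\nu)$ let $v=\mu/N$, $w=\nu/N$, $S=\{0,\dots,N\}$ and \[ P_{ij}=(1-v)^{N-i}(1-w)^i\sum_{\substack{\ell,m\ge0:\ \ell-m=j-i}}\binom{N-i}{\ell}\binom{i}{m}\Big(\frac v{1-v}\Big)^\ell\Big(\frac w{1-w}\Big)^m. \] Let $g(z)=(\sqrt{\mu(1-z)}-\sqrt{\nu z})^2$ for $z\in[0,1]$. Then for all $i\in S$, \[ \sum_{j\in S}\sqrt{P_{ij}P_{ji}}\le e^{-g(i/N)}+\mathcal{O}(1/\sqrt N), \] where the $\mathcal{O}(1/\sqrt N)$ term depends on $\mu$ and $\nu$ but not on $i$ (i.e. there is $C=C(\mu,\nu)$ with the bound $e^{-g(i/N)}+C/\sqrt N$ for all such $N$ and all $i\in S$).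
   Context: $P_{ij}$ is the probability that a sequence in $\{0,1\}^N$ with $i$ ones, mutated independently at each site ($0\to1$ with probability $v$, $1\to0$ with probability $w$), ends up with $j$ ones. *)

theory Defs
  imports "HOL-Analysis.Analysis"
begin

text \<open>Transition probability P_{ij} of the mutation chain on {0..N}, with v, w the
per-site mutation probabilities (0 to 1 with prob. v, 1 to 0 with prob. w).\<close>
definition mutP :: "nat \<Rightarrow> real \<Rightarrow> real \<Rightarrow> nat \<Rightarrow> nat \<Rightarrow> real" where
  "mutP N v w i j =
     (1 - v) ^ (N - i) * (1 - w) ^ i *
     (\<Sum>l\<in>{0..N - i}. \<Sum>m\<in>{0..i}.
        if int l - int m = int j - int i
        then real ((N - i) choose l) * real (i choose m) * (v / (1 - v)) ^ l * (w / (1 - w)) ^ m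
        else 0)"

definition gfun :: "real \<Rightarrow> real \<Rightarrow> real \<Rightarrow> real" where
  "gfun \<mu> \<nu> z = (sqrt (\<mu> * (1 - z)) - sqrt (\<nu> * z))\<^sup>2"

end

theory Submission
  imports Defs
begin

text \<open>
  The mutation chain is reversible with respect to the binomial weights
  \<open>\<pi>\<^sub>k = (N choose k) v\<^sup>k w\<^bsup>N-k\<^esup>\<close>, so
  \<open>sqrt (P\<^sub>i\<^sub>j P\<^sub>j\<^sub>i) = sqrt (\<pi>\<^sub>i / \<pi>\<^sub>j) P\<^sub>i\<^sub>j\<close>.
  Splitting \<open>P\<^sub>i\<^sub>j\<close> according to the numbers \<open>l\<close> of \<open>0 \<rightarrow> 1\<close> and \<open>m\<close> of
  \<open>1 \<rightarrow> 0\<close> flips, and matching each pair with the reverse pair \<open>(m, l)\<close> from \<open>j = i + l - m\<close>,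
  the sum over \<open>j\<close> becomes a double sum over \<open>(l, m)\<close> of geometric means of flip probabilities.
  Bounding binomial coefficients by \<open>n\<^sup>k / k!\<close> and \<open>(1 - v)\<^sup>k\<close> by \<open>exp (- v k)\<close>,
  with \<open>z = i / N\<close> and \<open>S = sqrt (\<mu> \<nu> z (1 - z))\<close> the \<open>(l, m)\<close> term is at most
  \<open>exp (- \<mu> (1 - z) - \<nu> z) q\<^sub>l\<^sup>l / l! r\<^sub>m\<^sup>m / m!\<close>, where \<open>q\<^sub>l, r\<^sub>m\<close> exceed \<open>S\<close>
  by \<open>O(sqrt (l / N))\<close>, \<open>O(sqrt (m / N))\<close> and a factor \<open>1 + O(1 / N)\<close>.
  Both perturbed exponential series are \<open>exp S + O(1 / sqrt N)\<close>, and
  \<open>exp (- \<mu> (1 - z) - \<nu> z) exp (2 S) = exp (- g z)\<close>.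
\<close>

lemma product_le_square_sqrt_sum:
  fixes n a L p :: real
  assumes "0 < n" "0 \<le> a" "a \<le> n" "0 \<le> L" "0 \<le> p"
  shows "a * (n - a + L) * (p / n\<^sup>2) \<le> (sqrt (p * (a / n * (1 - a / n))) + sqrt p * sqrt (L / n))\<^sup>2"
proof -
  have "a * (n - a + L) * (p / n\<^sup>2) = p * (a / n * (1 - a / n)) + p * (a / n) * (L / n)"
    using assms by (simp add: field_simps power2_eq_square)
  also have "\<dots> \<le> p * (a / n * (1 - a / n)) + p * (L / n)"
  proof -
    have "a / n * (L / n) \<le> 1 * (L / n)"
      using assms by (intro mult_right_mono) auto
    then have "p * (a / n * (L / n)) \<le> p * (L / n)"
      using assms by (intro mult_left_mono) auto
    then show ?thesis by (simp only: mult.assoc add_left_mono)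
  qed
  also have "\<dots> = (sqrt (p * (a / n * (1 - a / n))))\<^sup>2 + (sqrt p * sqrt (L / n))\<^sup>2"
    using assms by (simp add: power_mult_distrib)
  also have "\<dots> \<le> (sqrt (p * (a / n * (1 - a / n))) + sqrt p * sqrt (L / n))\<^sup>2"
    using assms unfolding power2_sum by (simp add: zero_le_mult_iff)
  finally show ?thesis .
qed

lemma perturbed_product_le:
  fixes E X Y K1 K2 \<rho> :: real
  assumes "0 \<le> E" "E \<le> 1" "0 \<le> X" "X \<le> Y" "0 \<le> K1" "0 \<le> K2" "1 \<le> \<rho>"
  shows "E * (X + K1 / \<rho>) * (X + K2 / \<rho>) \<le> E * X\<^sup>2 + (Y * (K1 + K2) + K1 * K2) / \<rho>"
proof -
  have "K1 * K2 * 1 \<le> K1 * K2 * \<rho>"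
    using assms by (intro mult_left_mono) auto
  then have "K1 / \<rho> * (K2 / \<rho>) \<le> K1 * K2 / \<rho>"
    using assms by (simp add: field_simps power2_eq_square)
  moreover have "X * (K1 / \<rho> + K2 / \<rho>) \<le> Y * (K1 / \<rho> + K2 / \<rho>)"
    using assms by (intro mult_right_mono) auto
  ultimately have "E * (X * (K1 / \<rho> + K2 / \<rho>) + K1 / \<rho> * (K2 / \<rho>))
      \<le> 1 * (Y * (K1 / \<rho> + K2 / \<rho>) + K1 * K2 / \<rho>)"
    using assms by (intro mult_mono add_mono) auto
  then show ?thesis by (simp add: algebra_simps power2_eq_square add_divide_distrib)
qed

lemma exp_minus_one_le: "exp t - 1 \<le> t * exp (t::real)"
proof -
  have "(1 - t) * exp t \<le> exp (- t) * exp t"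
    using exp_ge_add_one_self[of "- t"] by (intro mult_right_mono) auto
  then show ?thesis by (simp add: algebra_simps flip: exp_add)
qed

lemma one_minus_power_le_exp:
  fixes v :: real
  assumes "v \<le> 1"
  shows "(1 - v) ^ k \<le> exp (- (v * real k))"
proof -
  have "(1 - v) ^ k \<le> exp (- v) ^ k"
    using assms exp_ge_add_one_self[of "- v"] by (intro power_mono) auto
  then show ?thesis by (simp flip: exp_of_nat_mult add: mult_ac)
qed

lemma one_minus_div_power_le_exp:
  fixes c :: real and N k l :: nat
  assumes "0 < N" "c \<le> real N" "l \<le> k"
  shows "(1 - c / real N) ^ (k - l) \<le> exp (- (c * (real k / real N))) * exp (c / real N) ^ l"
proof -
  have "(1 - c / real N) ^ (k - l) \<le> exp (- (c / real N * real (k - l)))"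
    using assms by (intro one_minus_power_le_exp) simp
  also have "- (c / real N * real (k - l)) = - (c * (real k / real N)) + real l * (c / real N)"
    using assms by (simp add: of_nat_diff field_simps)
  finally show ?thesis by (simp only: exp_add exp_of_nat_mult)
qed

lemma power_diff_le:
  fixes s x D :: real
  assumes "0 \<le> s" "s \<le> x" "x \<le> D" "1 \<le> D"
  shows "x ^ l - s ^ l \<le> real l * (x - s) * D ^ l"
proof (induction l)
  case 0
  then show ?case by simp
next
  case (Suc l)
  have "s ^ l \<le> D ^ Suc l"
    using assms power_mono[of s D l] power_increasing[of l "Suc l" D] by (simp del: power_Suc)
  then have "s ^ l * (x - s) \<le> D ^ Suc l * (x - s)"
    using assms by (intro mult_right_mono) auto
  moreover have "x * (x ^ l - s ^ l) \<le> D * (real l * (x - s) * D ^ l)"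
    using Suc assms by (intro mult_mono) (auto intro!: power_mono)
  ultimately have "x * (x ^ l - s ^ l) + s ^ l * (x - s) \<le> real (Suc l) * (x - s) * D ^ Suc l"
    by (simp add: algebra_simps)
  then show ?case by (simp add: algebra_simps)
qed

lemma of_nat_square_le_four_power: "real l ^ 2 \<le> 4 ^ l"
proof -
  have l: "real l \<le> 2 ^ l"
    using less_exp[of l] by (simp add: less_imp_le)
  have "real l ^ 2 = real l * real l" by (rule power2_eq_square)
  also have "\<dots> \<le> 2 ^ l * 2 ^ l" using l by (intro mult_mono) auto
  also have "\<dots> = 4 ^ l" by (simp flip: power_mult_distrib)
  finally show ?thesis .
qed


section \<open>Perturbed exponential series\<close>

lemma sum_power_div_fact_le_exp:
  fixes y :: real
  assumes "0 \<le> y"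
  shows "(\<Sum>l\<in>{0..n}. y ^ l / fact l) \<le> exp y"
  using assms summable_exp_generic[of y]
  by (auto simp: exp_def divide_inverse ac_simps atLeast0AtMost intro!: sum_le_suminf)

lemma sum_power_div_fact_le_exp_perturbed:
  fixes x :: "nat \<Rightarrow> real"
  assumes "0 \<le> s" "1 \<le> D" "0 \<le> \<epsilon>"
    and "\<And>l. l \<in> {1..n} \<Longrightarrow> s \<le> x l \<and> x l \<le> D \<and> x l - s \<le> \<epsilon> * real l"
  shows "(\<Sum>l\<in>{0..n}. x l ^ l / fact l) \<le> exp s + \<epsilon> * exp (4 * D)"
proof -
  have term_le: "x l ^ l / fact l \<le> s ^ l / fact l + \<epsilon> * ((4 * D) ^ l / fact l)"
    if "l \<le> n" for l
  proof (cases "l = 0")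
    case False
    then have x: "s \<le> x l" "x l \<le> D" "x l - s \<le> \<epsilon> * real l"
      using assms(4)[of l] that by auto
    have "x l ^ l - s ^ l \<le> real l * (x l - s) * D ^ l"
      using power_diff_le[OF assms(1) x(1,2) assms(2)] .
    also have "\<dots> \<le> real l * (\<epsilon> * real l) * D ^ l"
      using x(3) assms(2) by (intro mult_right_mono mult_left_mono) auto
    also have "\<dots> = \<epsilon> * real l ^ 2 * D ^ l" by (simp add: power2_eq_square)
    also have "\<dots> \<le> \<epsilon> * 4 ^ l * D ^ l"
      using of_nat_square_le_four_power[of l] assms(2,3) by (intro mult_right_mono mult_left_mono) auto
    finally have "x l ^ l \<le> s ^ l + \<epsilon> * (4 * D) ^ l" by (simp add: power_mult_distrib)
    then show ?thesis by (simp add: divide_right_mono flip: add_divide_distrib)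
  qed (use assms in simp)
  have "(\<Sum>l\<in>{0..n}. x l ^ l / fact l)
      \<le> (\<Sum>l\<in>{0..n}. s ^ l / fact l + \<epsilon> * ((4 * D) ^ l / fact l))"
    using term_le by (intro sum_mono) auto
  also have "\<dots> = (\<Sum>l\<in>{0..n}. s ^ l / fact l) + \<epsilon> * (\<Sum>l\<in>{0..n}. (4 * D) ^ l / fact l)"
    by (simp add: sum.distrib sum_distrib_left)
  also have "\<dots> \<le> exp s + \<epsilon> * exp (4 * D)"
    using assms sum_power_div_fact_le_exp[of s n] sum_power_div_fact_le_exp[of "4 * D" n]
    by (intro add_mono mult_left_mono) auto
  finally show ?thesis .
qed

definition series_error_const :: "real \<Rightarrow> real \<Rightarrow> real" where
  "series_error_const b c = b * exp 1 * (c + 1) * exp (4 * (2 * b * exp 1 + 1))"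

lemma series_error_const_nonneg: "0 \<le> b \<Longrightarrow> 0 \<le> c \<Longrightarrow> 0 \<le> series_error_const b c"
  unfolding series_error_const_def by simp

lemma perturbed_base_bounds:
  fixes s b c :: real and N l :: nat
  assumes "0 \<le> s" "s \<le> b" "0 \<le> c" "c \<le> real N" "1 \<le> l" "l \<le> N"
  defines "x \<equiv> (s + b * sqrt (real l / real N)) * exp (c / real N)"
  shows "s \<le> x" and "x \<le> 2 * b * exp 1 + 1"
    and "x - s \<le> b * exp 1 * (c + 1) / sqrt (real N) * real l"
proof -
  have N: "0 < real N" using assms by simp
  have b: "0 \<le> b" using assms by linarith
  define t where "t = c / real N"
  have t: "0 \<le> t" "t \<le> 1" using assms N by (auto simp: t_def)
  have sqrt_l: "sqrt (real l / real N) \<le> 1" using assms N by auto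
  have "s * 1 \<le> x"
    using assms b t unfolding x_def t_def[symmetric] by (intro mult_mono) auto
  then show "s \<le> x" by simp
  have "x \<le> (b + b * 1) * exp 1"
    using assms b sqrt_l t unfolding x_def t_def[symmetric] by (intro mult_mono add_mono mult_left_mono) auto
  then show "x \<le> 2 * b * exp 1 + 1" by simp
  have "s * (exp t - 1) \<le> b * (t * exp t)"
    using assms t exp_minus_one_le[of t] by (intro mult_mono) auto
  also have "\<dots> \<le> b * (c * real l / sqrt (real N) * exp 1)"
  proof -
    have "sqrt (real N) \<le> real N" using N by (intro real_le_lsqrt) (auto simp: power2_eq_square)
    then have "t \<le> c / sqrt (real N)"
      unfolding t_def using assms N by (intro divide_left_mono) auto
    also have "\<dots> \<le> c * real l / sqrt (real N)"
      using assms mult_left_mono[of 1 "real l" c] by (intro divide_right_mono) auto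
    finally show ?thesis
      using b t by (intro mult_left_mono mult_mono) auto
  qed
  finally have d1: "s * (exp t - 1) \<le> b * exp 1 * c * real l / sqrt (real N)"
    by (simp add: mult_ac)
  have "sqrt (real l / real N) \<le> real l / sqrt (real N)"
    using assms by (auto simp: real_sqrt_divide power2_eq_square intro!: divide_right_mono real_le_lsqrt)
  then have "b * sqrt (real l / real N) * exp t \<le> b * (real l / sqrt (real N)) * exp 1"
    using b t by (intro mult_mono mult_left_mono) auto
  then have d2: "b * sqrt (real l / real N) * exp t \<le> b * exp 1 * real l / sqrt (real N)"
    by (simp add: mult_ac)
  have "x - s = s * (exp t - 1) + b * sqrt (real l / real N) * exp t"
    by (simp add: x_def t_def algebra_simps)
  also have "\<dots> \<le> b * exp 1 * (c + 1) / sqrt (real N) * real l"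
    using add_mono[OF d1 d2] by (simp add: add_divide_distrib algebra_simps)
  finally show "x - s \<le> b * exp 1 * (c + 1) / sqrt (real N) * real l" .
qed

lemma sum_exp_series_perturbed_le:
  fixes s b c :: real and N n :: nat
  assumes "0 \<le> s" "s \<le> b" "0 \<le> c" "c \<le> real N" "n \<le> N"
  shows "(\<Sum>l\<in>{0..n}. ((s + b * sqrt (real l / real N)) * exp (c / real N)) ^ l / fact l)
         \<le> exp s + series_error_const b c / sqrt (real N)"
proof (cases "N = 0")
  case False
  have "(\<Sum>l\<in>{0..n}. ((s + b * sqrt (real l / real N)) * exp (c / real N)) ^ l / fact l)
      \<le> exp s + b * exp 1 * (c + 1) / sqrt (real N) * exp (4 * (2 * b * exp 1 + 1))"
    using assms False perturbed_base_bounds[OF assms(1-4)]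
    by (intro sum_power_div_fact_le_exp_perturbed) auto
  then show ?thesis by (simp add: series_error_const_def)
qed (use assms sum_power_div_fact_le_exp[of s n] in simp)


section \<open>Binomial coefficients\<close>

lemma of_nat_choose_le_power_div_fact: "real (n choose k) \<le> real n ^ k / fact k"
proof -
  have "real ((n choose k) * fact k) \<le> real (n ^ k)"
    using binomial_fact_pow[of n k] by (rule of_nat_mono)
  then show ?thesis by (simp add: field_simps)
qed

lemma binomial_product_le:
  fixes t y q :: real
  assumes "0 \<le> t" "real b \<le> y" "real a * y * t \<le> q\<^sup>2"
  shows "real (a choose l) * real (b choose l) * t ^ l \<le> (q ^ l / fact l)\<^sup>2"
proof -
  have "real (a choose l) * real (b choose l) * t ^ l \<le> (real a ^ l / fact l) * (y ^ l / fact l) * t ^ l"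
  proof (intro mult_right_mono mult_mono)
    have "real (b choose l) \<le> real b ^ l / fact l" by (rule of_nat_choose_le_power_div_fact)
    also have "\<dots> \<le> y ^ l / fact l" using assms by (intro divide_right_mono power_mono) auto
    finally show "real (b choose l) \<le> y ^ l / fact l" .
  qed (use assms of_nat_choose_le_power_div_fact in auto)
  also have "\<dots> = (real a * y * t) ^ l / (fact l)\<^sup>2"
    by (simp add: power_mult_distrib power2_eq_square)
  also have "\<dots> \<le> (q\<^sup>2) ^ l / (fact l)\<^sup>2"
    using assms by (intro divide_right_mono power_mono) auto
  also have "\<dots> = (q ^ l / fact l)\<^sup>2"
    by (simp add: power_divide flip: power_mult, simp add: mult.commute)
  finally show ?thesis .
qed

lemma binomial_product_le_sqrt_sum:
  fixes p :: real and N a b L :: nat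
  assumes "0 < N" "a \<le> N" "b \<le> N - a + L" "0 \<le> p"
  shows "real (a choose L) * real (b choose L) * (p / (real N)\<^sup>2) ^ L
    \<le> ((sqrt (p * (real a / real N * (1 - real a / real N))) + sqrt p * sqrt (real L / real N)) ^ L
        / fact L)\<^sup>2"
proof (rule binomial_product_le[where y = "real N - real a + real L"])
  have "real b \<le> real (N - a + L)" using assms by simp
  then show "real b \<le> real N - real a + real L" using assms by (simp add: of_nat_diff)
  show "real a * (real N - real a + real L) * (p / (real N)\<^sup>2)
      \<le> (sqrt (p * (real a / real N * (1 - real a / real N))) + sqrt p * sqrt (real L / real N))\<^sup>2"
    using assms by (intro product_le_square_sqrt_sum) auto
qed (use assms in simp)

lemma multinomial4_fact:
  "fact a * fact b * fact c * fact d * ((a + b + c + d) choose (b + d)) * ((a + c) choose c) * ((b + d) choose b)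
     = (fact (a + b + c + d) :: nat)"
proof -
  have "fact b * fact d * ((b + d) choose b) = (fact (b + d) :: nat)"
    using binomial_fact_lemma[of b "b + d"] by simp
  moreover have "fact c * fact a * ((a + c) choose c) = (fact (a + c) :: nat)"
    using binomial_fact_lemma[of c "a + c"] by simp
  moreover have "fact (b + d) * fact (a + c) * ((a + b + c + d) choose (b + d)) = (fact (a + b + c + d) :: nat)"
    using binomial_fact_lemma[of "b + d" "a + b + c + d"] by (simp add: ac_simps)
  ultimately show ?thesis by (metis (no_types, lifting) mult.commute mult.left_commute)
qed

lemma binomial_product_swap:
  "real ((a + b + c + d) choose (b + d)) * real ((a + c) choose c) * real ((b + d) choose b)
     = real ((a + b + c + d) choose (c + d)) * real ((a + b) choose b) * real ((c + d) choose c)"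
proof -
  have "(fact a * fact b * fact c * fact d :: nat) * (((a + b + c + d) choose (b + d)) * ((a + c) choose c) * ((b + d) choose b))
      = (fact a * fact b * fact c * fact d) * (((a + b + c + d) choose (c + d)) * ((a + b) choose b) * ((c + d) choose c))"
    using multinomial4_fact[of a b c d] multinomial4_fact[of a c b d] by (simp add: ac_simps)
  then show ?thesis by (simp flip: of_nat_mult)
qed


section \<open>Reversibility of the mutation chain\<close>

definition flip_prob :: "nat \<Rightarrow> real \<Rightarrow> real \<Rightarrow> nat \<Rightarrow> nat \<Rightarrow> nat \<Rightarrow> real" where
  "flip_prob N v w k l m =
     real ((N - k) choose l) * real (k choose m) * v ^ l * (1 - v) ^ (N - k - l) * w ^ m * (1 - w) ^ (k - m)"

lemma flip_prob_nonneg: "0 \<le> v \<Longrightarrow> v \<le> 1 \<Longrightarrow> 0 \<le> w \<Longrightarrow> w \<le> 1 \<Longrightarrow> 0 \<le> flip_prob N v w k l m"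
  unfolding flip_prob_def by simp

lemma mutP_eq_sum_flip_prob:
  assumes "v \<noteq> 1" "w \<noteq> 1"
  shows "mutP N v w k j = (\<Sum>l\<in>{0..N - k}. \<Sum>m\<in>{0..k}.
            if int l - int m = int j - int k then flip_prob N v w k l m else 0)"
  unfolding mutP_def sum_distrib_left
proof (intro sum.cong refl)
  fix l m assume "l \<in> {0..N - k}" "m \<in> {0..k}"
  then have "N - k - l + l = N - k" "k - m + m = k" by auto
  then have "(1 - v) ^ (N - k) = (1 - v) ^ (N - k - l) * (1 - v) ^ l"
    and "(1 - w) ^ k = (1 - w) ^ (k - m) * (1 - w) ^ m"
    by (metis power_add)+
  then show "(1 - v) ^ (N - k) * (1 - w) ^ k *
        (if int l - int m = int j - int k
         then real (N - k choose l) * real (k choose m) * (v / (1 - v)) ^ l * (w / (1 - w)) ^ m else 0) =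
        (if int l - int m = int j - int k then flip_prob N v w k l m else 0)"
    unfolding flip_prob_def using assms by (simp add: power_divide field_simps)
qed

lemma sum_sum_if_eq_sum_filter:
  fixes f :: "'a \<Rightarrow> 'b \<Rightarrow> 'c::comm_monoid_add"
  assumes "finite A" "finite B"
  shows "(\<Sum>x\<in>A. \<Sum>y\<in>B. if P x y then f x y else 0) = (\<Sum>(x, y)\<in>{p \<in> A \<times> B. P (fst p) (snd p)}. f x y)"
  using assms by (simp add: sum.cartesian_product sum.inter_filter case_prod_beta)

definition stat_weight :: "nat \<Rightarrow> real \<Rightarrow> real \<Rightarrow> nat \<Rightarrow> real" where
  "stat_weight N v w k = real (N choose k) * v ^ k * w ^ (N - k)"

lemma flip_prob_detailed_balance:
  assumes "i \<le> N" "l \<le> N - i" "m \<le> i"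
  shows "stat_weight N v w (i + l - m) * flip_prob N v w (i + l - m) m l
       = stat_weight N v w i * flip_prob N v w i l m"
proof -
  obtain a d where a: "a = N - i - l" and d: "d = i - m" by blast
  have N: "N = a + l + m + d" and i: "i = m + d" and j: "i + l - m = l + d"
    using assms a d by auto
  have "stat_weight N v w (i + l - m) * flip_prob N v w (i + l - m) m l
      = real ((a + l + m + d) choose (l + d)) * real ((a + m) choose m) * real ((l + d) choose l)
        * (v ^ l * v ^ m * v ^ d * (w ^ a * w ^ l * w ^ m) * (1 - v) ^ a * (1 - w) ^ d)"
    unfolding stat_weight_def flip_prob_def N j by (simp add: power_add mult_ac)
  also have "\<dots> = real ((a + l + m + d) choose (m + d)) * real ((a + l) choose l) * real ((m + d) choose m)
        * (v ^ l * v ^ m * v ^ d * (w ^ a * w ^ l * w ^ m) * (1 - v) ^ a * (1 - w) ^ d)"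
    by (subst binomial_product_swap) (rule refl)
  also have "\<dots> = stat_weight N v w i * flip_prob N v w i l m"
    unfolding stat_weight_def flip_prob_def N i by (simp add: power_add mult_ac)
  finally show ?thesis .
qed

lemma mutP_detailed_balance:
  assumes "v \<noteq> 1" "w \<noteq> 1" "i \<le> N" "j \<le> N"
  shows "stat_weight N v w j * mutP N v w j i = stat_weight N v w i * mutP N v w i j"
proof -
  define K where "K = {p \<in> {0..N - i} \<times> {0..i}. int (fst p) - int (snd p) = int j - int i}"
  define K' where "K' = {p \<in> {0..N - j} \<times> {0..j}. int (fst p) - int (snd p) = int i - int j}"
  have K': "K' = prod.swap ` K"
    using assms(3,4) unfolding K_def K'_def by (auto simp: image_iff)
  have "mutP N v w j i = (\<Sum>(l, m)\<in>K'. flip_prob N v w j l m)"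
    unfolding mutP_eq_sum_flip_prob[OF assms(1,2)] K'_def by (rule sum_sum_if_eq_sum_filter) auto
  also have "\<dots> = (\<Sum>(l, m)\<in>K. flip_prob N v w j m l)"
    unfolding K' by (subst sum.reindex) (auto simp: case_prod_beta)
  finally have "stat_weight N v w j * mutP N v w j i = (\<Sum>(l, m)\<in>K. stat_weight N v w j * flip_prob N v w j m l)"
    by (simp add: sum_distrib_left case_prod_beta)
  also have "\<dots> = (\<Sum>(l, m)\<in>K. stat_weight N v w i * flip_prob N v w i l m)"
  proof (intro sum.cong refl, clarify)
    fix l m assume "(l, m) \<in> K"
    then have "j = i + l - m" "l \<le> N - i" "m \<le> i" unfolding K_def by auto
    then show "stat_weight N v w j * flip_prob N v w j m l = stat_weight N v w i * flip_prob N v w i l m"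
      using flip_prob_detailed_balance assms(3) by blast
  qed
  also have "\<dots> = stat_weight N v w i * (\<Sum>(l, m)\<in>K. flip_prob N v w i l m)"
    by (simp add: sum_distrib_left case_prod_beta)
  also have "\<dots> = stat_weight N v w i * mutP N v w i j"
    unfolding mutP_eq_sum_flip_prob[OF assms(1,2)] K_def
    by (simp only: sum_sum_if_eq_sum_filter[OF finite_atLeastAtMost finite_atLeastAtMost])
  finally show ?thesis .
qed

lemma sqrt_mutP_mul:
  assumes "0 < v" "v < 1" "0 < w" "w < 1" "i \<le> N" "j \<le> N"
  shows "sqrt (mutP N v w i j * mutP N v w j i) =
    (\<Sum>l\<in>{0..N - i}. \<Sum>m\<in>{0..i}.
       if int l - int m = int j - int i then sqrt (flip_prob N v w i l m * flip_prob N v w j m l) else 0)"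
proof -
  define \<rho> where "\<rho> = stat_weight N v w i / stat_weight N v w j"
  have stat_pos: "0 < stat_weight N v w k" if "k \<le> N" for k
    using assms that by (simp add: stat_weight_def)
  have \<rho>: "0 < \<rho>" unfolding \<rho>_def using stat_pos assms by simp
  have v1: "v \<noteq> 1" "w \<noteq> 1" using assms by auto
  have "mutP N v w j i = \<rho> * mutP N v w i j"
    using mutP_detailed_balance[OF v1 assms(5,6)] stat_pos[OF assms(6)]
    by (simp add: \<rho>_def field_simps)
  moreover have "0 \<le> mutP N v w i j"
    unfolding mutP_eq_sum_flip_prob[OF v1] using assms
    by (intro sum_nonneg) (auto intro: flip_prob_nonneg)
  ultimately have "sqrt (mutP N v w i j * mutP N v w j i) = sqrt \<rho> * mutP N v w i j"
    using \<rho> by (simp add: real_sqrt_mult mult_ac)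
  also have "\<dots> = (\<Sum>l\<in>{0..N - i}. \<Sum>m\<in>{0..i}.
       sqrt \<rho> * (if int l - int m = int j - int i then flip_prob N v w i l m else 0))"
    unfolding mutP_eq_sum_flip_prob[OF v1] by (simp add: sum_distrib_left)
  also have "\<dots> = (\<Sum>l\<in>{0..N - i}. \<Sum>m\<in>{0..i}.
       if int l - int m = int j - int i then sqrt (flip_prob N v w i l m * flip_prob N v w j m l) else 0)"
  proof (intro sum.cong refl)
    fix l m assume l: "l \<in> {0..N - i}" and m: "m \<in> {0..i}"
    show "sqrt \<rho> * (if int l - int m = int j - int i then flip_prob N v w i l m else 0) =
       (if int l - int m = int j - int i then sqrt (flip_prob N v w i l m * flip_prob N v w j m l) else 0)"
    proof (cases "int l - int m = int j - int i")
      case True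
      then have "j = i + l - m" by linarith
      then have "flip_prob N v w j m l = \<rho> * flip_prob N v w i l m"
        using flip_prob_detailed_balance[OF assms(5), of l m v w] l m stat_pos[OF assms(6)]
        by (simp add: \<rho>_def field_simps)
      moreover have "0 \<le> flip_prob N v w i l m"
        using assms by (intro flip_prob_nonneg) auto
      ultimately show ?thesis
        using True \<rho> by (simp add: real_sqrt_mult mult_ac)
    qed simp
  qed
  finally show ?thesis .
qed

lemma sum_sqrt_mutP_mul_eq:
  assumes "0 < v" "v < 1" "0 < w" "w < 1" "i \<le> N"
  shows "(\<Sum>j\<in>{0..N}. sqrt (mutP N v w i j * mutP N v w j i)) =
    (\<Sum>l\<in>{0..N - i}. \<Sum>m\<in>{0..i}. sqrt (flip_prob N v w i l m * flip_prob N v w (i + l - m) m l))"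
proof -
  have "(\<Sum>j\<in>{0..N}. sqrt (mutP N v w i j * mutP N v w j i))
      = (\<Sum>l\<in>{0..N - i}. \<Sum>m\<in>{0..i}. \<Sum>j\<in>{0..N}.
            if int l - int m = int j - int i then sqrt (flip_prob N v w i l m * flip_prob N v w j m l) else 0)"
    using assms by (simp add: sqrt_mutP_mul sum.swap[of _ "{0..N}"])
  also have "\<dots> = (\<Sum>l\<in>{0..N - i}. \<Sum>m\<in>{0..i}. sqrt (flip_prob N v w i l m * flip_prob N v w (i + l - m) m l))"
  proof (intro sum.cong refl)
    fix l m assume "l \<in> {0..N - i}" "m \<in> {0..i}"
    then have "(int l - int m = int j - int i) = (j = i + l - m)" "i + l - m \<le> N" for j
      using assms by auto
    then show "(\<Sum>j\<in>{0..N}. if int l - int m = int j - int i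
        then sqrt (flip_prob N v w i l m * flip_prob N v w j m l) else 0)
      = sqrt (flip_prob N v w i l m * flip_prob N v w (i + l - m) m l)"
      by (simp add: sum.delta')
  qed
  finally show ?thesis .
qed


lemma sqrt_flip_prob_mul_le:
  fixes \<mu> \<nu> :: real and N i l m :: nat
  assumes "0 < \<mu>" "0 < \<nu>" "\<mu> \<le> real N" "\<nu> \<le> real N" "i \<le> N" "l \<le> N - i" "m \<le> i"
  defines "z \<equiv> real i / real N"
  defines "S \<equiv> sqrt (\<mu> * \<nu> * (z * (1 - z)))"
  defines "B \<equiv> sqrt (\<mu> * \<nu>)"
  shows "sqrt (flip_prob N (\<mu> / N) (\<nu> / N) i l m * flip_prob N (\<mu> / N) (\<nu> / N) (i + l - m) m l)
    \<le> exp (- (\<mu> * (1 - z) + \<nu> * z))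
       * (((S + B * sqrt (real l / real N)) * exp (\<mu> / real N)) ^ l / fact l)
       * (((S + B * sqrt (real m / real N)) * exp (\<nu> / real N)) ^ m / fact m)"
proof -
  define v w j where "v = \<mu> / real N" and "w = \<nu> / real N" and "j = i + l - m"
  define q r where "q = S + B * sqrt (real l / real N)" and "r = S + B * sqrt (real m / real N)"
  have N: "0 < N" using assms by linarith
  have z: "real (N - i) / real N = 1 - z"
    using assms N by (auto simp: z_def of_nat_diff field_simps)
  have vw: "v * w = \<mu> * \<nu> / (real N)\<^sup>2" by (simp add: v_def w_def power2_eq_square)
  have "0 \<le> z" "z \<le> 1" using assms N by (auto simp: z_def)
  then have "0 \<le> S" "0 \<le> B" using assms by (simp_all add: S_def B_def)
  then have qr: "0 \<le> q" "0 \<le> r" by (simp_all add: q_def r_def)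
  txt \<open>The forward and the backward move choose the same \<open>l\<close> flipped zeros and \<open>m\<close> flipped ones,
    so the binomials pair up with a common power of \<open>v w\<close>.\<close>
  define X where "X = real ((N - i) choose l) * real (j choose l) * (v * w) ^ l"
  define Y where "Y = real (i choose m) * real ((N - j) choose m) * (v * w) ^ m"
  define Z1 where "Z1 = (1 - v) ^ (N - i - l)"
  define Z2 where "Z2 = (1 - w) ^ (i - m)"
  have "N - j - m = N - i - l" "j - l = i - m" using assms by (auto simp: j_def)
  then have "flip_prob N v w i l m * flip_prob N v w j m l = X * Y * Z1\<^sup>2 * Z2\<^sup>2"
    unfolding flip_prob_def X_def Y_def Z1_def Z2_def
    by (simp add: power_mult_distrib power2_eq_square mult_ac)
  also have "\<dots> \<le> (q ^ l / fact l)\<^sup>2 * (r ^ m / fact m)\<^sup>2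
      * (exp (- (\<mu> * (1 - z))) * exp (\<mu> / real N) ^ l)\<^sup>2 * (exp (- (\<nu> * z)) * exp (\<nu> / real N) ^ m)\<^sup>2"
  proof (intro mult_mono power_mono)
    show "X \<le> (q ^ l / fact l)\<^sup>2"
      using binomial_product_le_sqrt_sum[of N "N - i" j l "\<mu> * \<nu>"] assms N
      unfolding X_def vw z q_def S_def B_def by (simp add: j_def mult.commute)
    show "Y \<le> (r ^ m / fact m)\<^sup>2"
      using binomial_product_le_sqrt_sum[of N i "N - j" m "\<mu> * \<nu>"] assms N
      unfolding Y_def vw r_def S_def B_def z_def by (simp add: j_def)
    show "Z1 \<le> exp (- (\<mu> * (1 - z))) * exp (\<mu> / real N) ^ l"
      using one_minus_div_power_le_exp[of N \<mu> l "N - i"] assms N unfolding Z1_def v_def z by simp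
    show "Z2 \<le> exp (- (\<nu> * z)) * exp (\<nu> / real N) ^ m"
      using one_minus_div_power_le_exp[of N \<nu> m i] assms N unfolding Z2_def w_def z_def by simp
  qed (use assms in \<open>auto simp: X_def Y_def Z1_def Z2_def v_def w_def\<close>)
  also have "\<dots> = (exp (- (\<mu> * (1 - z) + \<nu> * z)) * ((q * exp (\<mu> / real N)) ^ l / fact l)
      * ((r * exp (\<nu> / real N)) ^ m / fact m))\<^sup>2"
    unfolding minus_add_distrib exp_add by (simp add: power_mult_distrib power_divide mult_ac)
  finally show ?thesis
    using qr by (simp add: v_def w_def j_def q_def r_def real_le_lsqrt)
qed

lemma gfun_eq:
  assumes "0 \<le> \<mu>" "0 \<le> \<nu>" "0 \<le> z" "z \<le> 1"
  shows "gfun \<mu> \<nu> z = \<mu> * (1 - z) + \<nu> * z - 2 * sqrt (\<mu> * \<nu> * (z * (1 - z)))"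
  using assms by (simp add: gfun_def power2_diff real_sqrt_mult power_mult_distrib mult_ac)

lemma sum_sqrt_mutP_mul_le:
  fixes \<mu> \<nu> :: real and N i :: nat
  assumes "0 < \<mu>" "0 < \<nu>" "\<mu> < real N" "\<nu> < real N" "i \<le> N"
  defines "K1 \<equiv> series_error_const (sqrt (\<mu> * \<nu>)) \<mu>"
  defines "K2 \<equiv> series_error_const (sqrt (\<mu> * \<nu>)) \<nu>"
  shows "(\<Sum>j\<in>{0..N}. sqrt (mutP N (\<mu> / N) (\<nu> / N) i j * mutP N (\<mu> / N) (\<nu> / N) j i))
    \<le> exp (- gfun \<mu> \<nu> (real i / real N)) + (exp (sqrt (\<mu> * \<nu>)) * (K1 + K2) + K1 * K2) / sqrt (real N)"
proof -
  define z where "z = real i / real N"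
  define S where "S = sqrt (\<mu> * \<nu> * (z * (1 - z)))"
  define B where "B = sqrt (\<mu> * \<nu>)"
  define E where "E = exp (- (\<mu> * (1 - z) + \<nu> * z))"
  define A where "A l = ((S + B * sqrt (real l / real N)) * exp (\<mu> / real N)) ^ l / fact l" for l
  define A' where "A' m = ((S + B * sqrt (real m / real N)) * exp (\<nu> / real N)) ^ m / fact m" for m
  have N: "0 < real N" using assms by linarith
  have z: "0 \<le> z" "z \<le> 1" using assms N by (auto simp: z_def)
  have SB: "0 \<le> S" "S \<le> B"
    using assms z mult_le_one[of z "1 - z"] by (auto simp: S_def B_def intro!: mult_left_le)
  have "0 \<le> \<mu> * (1 - z) + \<nu> * z" using assms z by simp
  then have E: "0 \<le> E" "E \<le> 1" by (simp_all add: E_def)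
  have "(\<Sum>j\<in>{0..N}. sqrt (mutP N (\<mu> / N) (\<nu> / N) i j * mutP N (\<mu> / N) (\<nu> / N) j i))
      = (\<Sum>l\<in>{0..N - i}. \<Sum>m\<in>{0..i}.
          sqrt (flip_prob N (\<mu> / N) (\<nu> / N) i l m * flip_prob N (\<mu> / N) (\<nu> / N) (i + l - m) m l))"
    using assms N by (intro sum_sqrt_mutP_mul_eq) auto
  also have "\<dots> \<le> (\<Sum>l\<in>{0..N - i}. \<Sum>m\<in>{0..i}. E * A l * A' m)"
    unfolding E_def A_def A'_def S_def B_def z_def
    using assms by (intro sum_mono sqrt_flip_prob_mul_le) auto
  also have "\<dots> = E * (\<Sum>l\<in>{0..N - i}. A l) * (\<Sum>m\<in>{0..i}. A' m)"
    by (simp add: sum_distrib_left sum_distrib_right mult_ac)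
  also have "\<dots> \<le> E * (exp S + K1 / sqrt (real N)) * (exp S + K2 / sqrt (real N))"
  proof (intro mult_mono)
    show "(\<Sum>l\<in>{0..N - i}. A l) \<le> exp S + K1 / sqrt (real N)"
      unfolding A_def K1_def B_def using SB[unfolded B_def] assms by (intro sum_exp_series_perturbed_le) auto
    show "(\<Sum>m\<in>{0..i}. A' m) \<le> exp S + K2 / sqrt (real N)"
      unfolding A'_def K2_def B_def using SB[unfolded B_def] assms by (intro sum_exp_series_perturbed_le) auto
    have "0 \<le> A l" "0 \<le> A' l" for l
      using SB by (simp_all add: A_def A'_def)
    then show "0 \<le> (\<Sum>l\<in>{0..N - i}. A l)" "0 \<le> (\<Sum>m\<in>{0..i}. A' m)"
      by (simp_all add: sum_nonneg)
    show "0 \<le> E * (exp S + K1 / sqrt (real N))"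
      using assms by (simp add: E_def K1_def series_error_const_nonneg)
  qed (use E in simp_all)
  also have "\<dots> \<le> E * (exp S)\<^sup>2 + (exp B * (K1 + K2) + K1 * K2) / sqrt (real N)"
    using SB E assms N unfolding K1_def K2_def B_def
    by (intro perturbed_product_le series_error_const_nonneg) auto
  also have "E * (exp S)\<^sup>2 = exp (- gfun \<mu> \<nu> z)"
    using assms z by (simp add: E_def S_def gfun_eq power2_eq_square flip: exp_add)
  finally show ?thesis by (simp add: z_def B_def)
qed

theorem proposition5:
  fixes \<mu> \<nu> :: real
  assumes "\<mu> > 0" and "\<nu> > 0"
  shows "\<exists>C::real. \<forall>N::nat. real N > max \<mu> \<nu> \<longrightarrow>
           (\<forall>i\<in>{0..N}.
              (\<Sum>j\<in>{0..N}. sqrt (mutP N (\<mu> / real N) (\<nu> / real N) i j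
                                  * mutP N (\<mu> / real N) (\<nu> / real N) j i))
              \<le> exp (- gfun \<mu> \<nu> (real i / real N)) + C / sqrt (real N))"
proof -
  define K1 K2 where "K1 = series_error_const (sqrt (\<mu> * \<nu>)) \<mu>"
    and "K2 = series_error_const (sqrt (\<mu> * \<nu>)) \<nu>"
  have "\<forall>N::nat. real N > max \<mu> \<nu> \<longrightarrow>
           (\<forall>i\<in>{0..N}.
              (\<Sum>j\<in>{0..N}. sqrt (mutP N (\<mu> / real N) (\<nu> / real N) i j
                                  * mutP N (\<mu> / real N) (\<nu> / real N) j i))
              \<le> exp (- gfun \<mu> \<nu> (real i / real N))
                 + (exp (sqrt (\<mu> * \<nu>)) * (K1 + K2) + K1 * K2) / sqrt (real N))"
    using assms sum_sqrt_mutP_mul_le unfolding K1_def K2_def by auto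
  then show ?thesis by blast
qed

end
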